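(* Let $M\ge1$ and for $d\in\{0,1\}$ let $\alpha_d(y)=\mathbb{P}(Y(d)=y,R(d)=1)$, $y\in[M]$. Suppose the response mechanism is the same in both arms, so that the identification set is \[\mathcal T=\Big\{\sum_{y=1}^M y\big(\alpha_1(y)-\alpha_0(y)\big)(w(y)+1):\ w\in\mathbb{R}^M,\ w\ge0,\ \sum_{y}\alpha_1(y)(w(y)+1)=1,\ \sum_y\alpha_0(y)(w(y)+1)=1\Big\}.\] Suppose there exists $y_0\in[M]$ such that $\alpha_1(y)\le\alpha_0(y)$ for all $y<y_0$ and $\alpha_1(y)\ge\alpha_0(y)$ for all $y\ge y_0$. Then $\tau\ge0$ for every $\tau\in\mathcal T$.
   Context: $Y(d)\in[M]$ and $R(d)\in\{0,1\}$ are the potential outcome and potential observation indicator under treatment $d$ in a randomized experiment; the common weight $w(y)$ plays the role of $1/\pi(y)-1$ where $\pi(y)=\mathbb{P}(R(1)=1\mid Y(1)=y)=\mathbb{P}(R(0)=1\mid Y(0)=y)$. $\mathcal T$ is the identification set for $\mathbb{E}[Y(1)-Y(0)]$ under this restriction. *)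

theory Defs
  imports "HOL-Analysis.Analysis"
begin

text \<open>Outcomes take values in [M] = {1..M}. alpha1 y = P(Y(1)=y, R(1)=1),
  alpha0 y = P(Y(0)=y, R(0)=1). The identification set of E[Y(1)-Y(0)]
  when the response mechanism is common to both arms.\<close>

definition ident_set :: "nat \<Rightarrow> (nat \<Rightarrow> real) \<Rightarrow> (nat \<Rightarrow> real) \<Rightarrow> real set" where
  "ident_set M alpha1 alpha0 =
     {(\<Sum>y=1..M. real y * (alpha1 y - alpha0 y) * (w y + 1)) | w.
        (\<forall>y\<in>{1..M}. w y \<ge> 0) \<and>
        (\<Sum>y=1..M. alpha1 y * (w y + 1)) = 1 \<and>
        (\<Sum>y=1..M. alpha0 y * (w y + 1)) = 1}"

end

theory Submission
  imports Defs
begin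

text \<open>Write \<open>d y = (\<alpha>\<^sub>1 y - \<alpha>\<^sub>0 y)(w y + 1)\<close>. The two normalisation constraints force
  \<open>\<Sum> d = 0\<close>, so \<open>\<tau> = \<Sum> y d y = \<Sum> (y - y\<^sub>0) d y\<close>; since \<open>w + 1 > 0\<close>, the sign of \<open>d y\<close> is
  that of \<open>\<alpha>\<^sub>1 y - \<alpha>\<^sub>0 y\<close>, which agrees with the sign of \<open>y - y\<^sub>0\<close>, so every term is
  nonnegative.\<close>

lemma single_crossing_weighted_sum_nonneg:
  fixes f d :: "'a \<Rightarrow> real" and c :: real
  assumes "sum d A = 0"
    and below: "\<And>y. y \<in> A \<Longrightarrow> f y < c \<Longrightarrow> d y \<le> 0"
    and above: "\<And>y. y \<in> A \<Longrightarrow> c \<le> f y \<Longrightarrow> 0 \<le> d y"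
  shows "0 \<le> (\<Sum>y\<in>A. f y * d y)"
proof -
  have "(\<Sum>y\<in>A. f y * d y) = (\<Sum>y\<in>A. (f y - c) * d y) + c * sum d A"
    by (simp add: left_diff_distrib sum_subtractf sum_distrib_left)
  also have "\<dots> = (\<Sum>y\<in>A. (f y - c) * d y)"
    using assms(1) by simp
  also have "\<dots> \<ge> 0"
  proof (rule sum_nonneg)
    fix y assume "y \<in> A"
    then show "0 \<le> (f y - c) * d y"
      using below above by (cases "f y < c") (auto intro: mult_nonpos_nonpos)
  qed
  finally show ?thesis .
qed

theorem proposition6:
  fixes M :: nat and alpha1 alpha0 :: "nat \<Rightarrow> real" and y0 :: nat and tau :: real
  assumes "M \<ge> 1"
    and "\<forall>y\<in>{1..M}. alpha1 y \<ge> 0" and "\<forall>y\<in>{1..M}. alpha0 y \<ge> 0"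
    and "(\<Sum>y=1..M. alpha1 y) \<le> 1" and "(\<Sum>y=1..M. alpha0 y) \<le> 1"
    and "y0 \<in> {1..M}"
    and "\<forall>y\<in>{1..M}. y < y0 \<longrightarrow> alpha1 y \<le> alpha0 y"
    and "\<forall>y\<in>{1..M}. y \<ge> y0 \<longrightarrow> alpha1 y \<ge> alpha0 y"
    and "tau \<in> ident_set M alpha1 alpha0"
  shows "tau \<ge> 0"
proof -
  obtain w where tau: "tau = (\<Sum>y=1..M. real y * (alpha1 y - alpha0 y) * (w y + 1))"
    and w_nonneg: "\<forall>y\<in>{1..M}. w y \<ge> 0"
    and norm1: "(\<Sum>y=1..M. alpha1 y * (w y + 1)) = 1"
    and norm0: "(\<Sum>y=1..M. alpha0 y * (w y + 1)) = 1"
    using assms(9) unfolding ident_set_def by blast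
  define d where "d y = (alpha1 y - alpha0 y) * (w y + 1)" for y
  have "(\<Sum>y=1..M. d y) = 0"
    using norm1 norm0 by (simp add: d_def left_diff_distrib sum_subtractf)
  moreover have "d y \<le> 0" if "y \<in> {1..M}" "real y < real y0" for y
    using that assms(7) w_nonneg unfolding d_def by (auto intro: mult_nonpos_nonneg)
  moreover have "0 \<le> d y" if "y \<in> {1..M}" "real y0 \<le> real y" for y
    using that assms(8) w_nonneg unfolding d_def by auto
  ultimately have "0 \<le> (\<Sum>y=1..M. real y * d y)"
    by (rule single_crossing_weighted_sum_nonneg)
  then show ?thesis
    by (simp add: tau d_def mult.assoc)
qed

end
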